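(* For every $b>0$ and $0\le\delta<1$ there exists a univariate polynomial $s_{b,\delta}$ of degree $\lceil\sqrt{2\theta\log(4/\delta)}\rceil$, where $\theta=\lceil\max\{\tfrac12be^2,\log(2/\delta)\}\rceil$, such that \[ |\exp(-2t)-s_{b,\delta}^2(t)|\le2\delta+\delta^2\le3\delta\qquad\forall t\in[0,b]. \]
   Context: $\log$ is the natural logarithm and $e$ is Euler's number. *)

theory Defs
  imports Complex_Main "HOL-Computational_Algebra.Polynomial"
begin

end

theory Submission
  imports Defs "HOL-Probability.Hoeffding"
begin

text \<open>Put \<open>l = b/2\<close> and \<open>x = 1 - t/l \<in> [-1, 1]\<close>, so that \<open>exp (-t) = exp (-l) * exp (l * x)\<close>.
  Truncating the Taylor series of \<open>exp (l * x)\<close> after the term \<open>x\<^sup>K\<close> costs at most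
  \<open>l\<^sup>K\<^sup>+\<^sup>1 / (K+1)! \<le> exp (-(K+1))\<close> once \<open>l e\<^sup>2 \<le> K\<close>. Each monomial \<open>x\<^sup>k\<close> with \<open>k \<le> K\<close> is then
  replaced by its Chebyshev expansion truncated at degree \<open>d\<close>; the error is a binomial tail,
  which a Chernoff bound makes at most \<open>2 exp (-d\<^sup>2 / 2k)\<close>. The resulting polynomial of degree \<open>d\<close>
  is within \<open>\<delta>\<close> of \<open>exp (-t)\<close> on \<open>[0, b]\<close>; a tiny multiple of \<open>t\<^sup>d\<close> makes the degree exact,
  and squaring turns the error \<open>\<delta>\<close> into \<open>2\<delta> + \<delta>\<^sup>2\<close>.\<close>

lemma cosh_le_exp_half_square:
  fixes s :: real
  shows "cosh s \<le> exp (s\<^sup>2 / 2)"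
proof -
  have "cosh s \<le> exp (s\<^sup>2 / 2)" if "s \<ge> 0" for s :: real
  proof -
    have "ln (1 + (1/2) * (exp (2 * s) - 1)) - s \<le> s\<^sup>2 / 2"
      using Hoeffdings_lemma_aux[of "2 * s" "1/2"] that by (simp add: power2_eq_square)
    moreover have "1 + (1/2) * (exp (2 * s) - 1) = exp s * cosh s"
      by (simp add: cosh_def field_simps flip: exp_add exp_minus)
    ultimately have "ln (cosh s) \<le> s\<^sup>2 / 2"
      by (simp add: ln_mult)
    then show ?thesis
      by (metis cosh_real_pos exp_le_cancel_iff exp_ln)
  qed
  from this[of "\<bar>s\<bar>"] show ?thesis
    by (cases "s \<ge> 0") simp_all
qed

lemma power_exp_plus_exp_minus:
  fixes z :: "'a :: {banach, real_normed_field}"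
  shows "(exp z + exp (-z)) ^ k = (\<Sum>j\<le>k. of_nat (k choose j) * exp (of_real (2 * real j - real k) * z))"
proof -
  have "(exp z + exp (-z)) ^ k = (\<Sum>j\<le>k. of_nat (k choose j) * exp z ^ j * exp (-z) ^ (k - j))"
    by (simp add: binomial_ring)
  also have "\<dots> = (\<Sum>j\<le>k. of_nat (k choose j) * exp (of_real (2 * real j - real k) * z))"
  proof (rule sum.cong)
    fix j assume "j \<in> {..k}"
    then have e: "of_real (2 * real j - real k) * z = of_nat j * z + of_nat (k - j) * (-z)"
      by (simp add: of_nat_diff algebra_simps)
    show "of_nat (k choose j) * exp z ^ j * exp (-z) ^ (k - j)
        = of_nat (k choose j) * exp (of_real (2 * real j - real k) * z)"
      unfolding e exp_add exp_of_nat_mult by (simp only: mult.assoc)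
  qed simp
  finally show ?thesis .
qed

lemma cos_power_eq_sum:
  fixes x :: real
  shows "cos x ^ k = (\<Sum>j\<le>k. real (k choose j) * cos ((2 * real j - real k) * x)) / 2 ^ k"
proof -
  have "complex_of_real (2 * cos x) = exp (\<i> * x) + exp (- (\<i> * x))"
    by (simp add: cos_exp_eq flip: cos_of_real)
  then have "complex_of_real ((2 * cos x) ^ k) = (exp (\<i> * x) + exp (- (\<i> * x))) ^ k"
    by (simp only: of_real_power)
  also have "\<dots> = (\<Sum>j\<le>k. of_nat (k choose j) * exp (\<i> * of_real ((2 * real j - real k) * x)))"
    by (simp add: power_exp_plus_exp_minus mult.left_commute)
  finally have "(2 * cos x) ^ k = Re (\<Sum>j\<le>k. of_nat (k choose j) * exp (\<i> * of_real ((2 * real j - real k) * x)))"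
    by (metis Re_complex_of_real)
  also have "\<dots> = (\<Sum>j\<le>k. real (k choose j) * cos ((2 * real j - real k) * x))"
    by (simp add: Re_exp)
  finally show ?thesis
    by (simp add: power_mult_distrib field_simps)
qed

lemma binomial_tail_le:
  fixes d :: real
  assumes "d \<ge> 0" and "k > 0"
  shows "(\<Sum>j | j \<le> k \<and> \<bar>2 * real j - real k\<bar> > d. real (k choose j))
           \<le> 2 * 2 ^ k * exp (- d\<^sup>2 / (2 * real k))"
proof -
  \<comment> \<open>Chernoff: each tail term is weighted by \<open>exp (s (\<bar>2j - k\<bar> - d)) \<ge> 1\<close>, with the optimal \<open>s\<close>.\<close>
  define s where "s = d / real k"
  have "s \<ge> 0"
    using assms by (simp add: s_def)
  define g where "g m = exp (- s * d) * (exp (s * m) + exp (- s * m))" for m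
  have g_ge_1: "1 \<le> g m" if "\<bar>m\<bar> > d" for m
  proof -
    have "exp (s * d) \<le> exp (s * \<bar>m\<bar>)"
      using \<open>s \<ge> 0\<close> that by (simp add: mult_left_mono)
    also have "\<dots> \<le> exp (s * m) + exp (- s * m)"
      by (cases "m \<ge> 0") (simp_all add: add_increasing add_increasing2)
    finally show ?thesis
      by (simp add: g_def exp_minus field_simps)
  qed
  let ?m = "\<lambda>j. 2 * real j - real k"
  have "(\<Sum>j | j \<le> k \<and> \<bar>?m j\<bar> > d. real (k choose j))
      \<le> (\<Sum>j | j \<le> k \<and> \<bar>?m j\<bar> > d. real (k choose j) * g (?m j))"
    using g_ge_1 by (intro sum_mono) (simp add: mult_le_cancel_left1)
  also have "\<dots> \<le> (\<Sum>j\<le>k. real (k choose j) * g (?m j))"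
    using g_ge_1 by (intro sum_mono2) (auto simp: g_def)
  also have "\<dots> = exp (- s * d) * ((exp s + exp (- s)) ^ k + (exp (- s) + exp (- (- s))) ^ k)"
    unfolding power_exp_plus_exp_minus by (simp add: g_def sum_distrib_left sum.distrib distrib_left mult_ac)
  also have "\<dots> = exp (- s * d) * (2 * (2 * cosh s) ^ k)"
    by (simp add: cosh_field_def add.commute add_divide_distrib)
  also have "\<dots> \<le> exp (- s * d) * (2 * (2 * exp (s\<^sup>2 / 2)) ^ k)"
    by (intro mult_left_mono power_mono cosh_le_exp_half_square) auto
  also have "\<dots> = 2 * 2 ^ k * exp (- s * d + real k * (s\<^sup>2 / 2))"
    by (simp add: power_mult_distrib flip: exp_of_nat_mult exp_add)
  also have "- s * d + real k * (s\<^sup>2 / 2) = - d\<^sup>2 / (2 * real k)"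
    using assms by (simp add: s_def field_simps power2_eq_square)
  finally show ?thesis .
qed

fun chebyshev_T :: "nat \<Rightarrow> 'a :: comm_ring_1 poly" where
  "chebyshev_T 0 = 1"
| "chebyshev_T (Suc 0) = [:0, 1:]"
| "chebyshev_T (Suc (Suc n)) = [:0, 2:] * chebyshev_T (Suc n) - chebyshev_T n"

lemma degree_chebyshev_T_le: "degree (chebyshev_T n :: 'a :: comm_ring_1 poly) \<le> n"
proof (induction n rule: chebyshev_T.induct)
  case (3 n)
  have "degree ([:0, 2:] * chebyshev_T (Suc n) :: 'a poly)
      \<le> degree ([:0, 2:] :: 'a poly) + degree (chebyshev_T (Suc n) :: 'a poly)"
    by (rule degree_mult_le)
  also have "\<dots> \<le> Suc (Suc n)"
    using 3 by simp
  finally have "degree ([:0, 2:] * chebyshev_T (Suc n) :: 'a poly) \<le> Suc (Suc n)" .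
  moreover have "degree (chebyshev_T n :: 'a poly) \<le> Suc (Suc n)"
    using 3 by simp
  ultimately show ?case
    by (simp add: degree_diff_le)
qed auto

lemma poly_chebyshev_T_cos: "poly (chebyshev_T n) (cos x) = cos (real n * x)"
proof (induction n rule: chebyshev_T.induct)
  case (3 n)
  have "cos (real (Suc (Suc n)) * x) = cos ((real n + 1) * x + x)"
    by (simp add: algebra_simps)
  also have "\<dots> = 2 * cos x * cos ((real n + 1) * x) - cos ((real n + 1) * x - x)"
    by (simp add: cos_add cos_diff)
  also have "(real n + 1) * x - x = real n * x"
    by (simp add: algebra_simps)
  finally show ?case
    using 3 by (simp add: algebra_simps)
qed auto

text \<open>On \<open>[-1, 1]\<close>, \<open>x ^ k = (\<Sum>j\<le>k. (k choose j) * poly (chebyshev_T \<bar>2j - k\<bar>) x) / 2 ^ k\<close>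
  (substitute \<open>x = cos a\<close>); the approximation keeps the terms of degree at most \<open>d\<close>.\<close>

definition chebyshev_power_approx :: "nat \<Rightarrow> nat \<Rightarrow> real poly" where
  "chebyshev_power_approx d k =
     (\<Sum>j | j \<le> k \<and> \<bar>2 * real j - real k\<bar> \<le> real d.
        smult (real (k choose j) / 2 ^ k) (chebyshev_T (nat \<bar>2 * int j - int k\<bar>)))"

lemma degree_chebyshev_power_approx_le: "degree (chebyshev_power_approx d k) \<le> d"
  unfolding chebyshev_power_approx_def
proof (rule degree_sum_le)
  fix j assume "j \<in> {j. j \<le> k \<and> \<bar>2 * real j - real k\<bar> \<le> real d}"
  then have "nat \<bar>2 * int j - int k\<bar> \<le> d"
    by simp linarith
  then show "degree (smult (real (k choose j) / 2 ^ k) (chebyshev_T (nat \<bar>2 * int j - int k\<bar>))) \<le> d"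
    using degree_chebyshev_T_le degree_smult_le le_trans by blast
qed auto

lemma chebyshev_power_approx_error_tail:
  fixes x :: real
  assumes "\<bar>x\<bar> \<le> 1"
  shows "\<bar>x ^ k - poly (chebyshev_power_approx d k) x\<bar>
           \<le> (\<Sum>j | j \<le> k \<and> \<bar>2 * real j - real k\<bar> > real d. real (k choose j)) / 2 ^ k"
proof -
  define a where "a = arccos x"
  have x_eq: "x = cos a"
    using assms by (simp add: a_def cos_arccos_abs)
  let ?S = "{j. j \<le> k \<and> \<bar>2 * real j - real k\<bar> \<le> real d}"
  let ?A = "{j. j \<le> k \<and> \<bar>2 * real j - real k\<bar> > real d}"
  let ?f = "\<lambda>j. real (k choose j) * cos ((2 * real j - real k) * a) / 2 ^ k"
  have "poly (chebyshev_power_approx d k) x = (\<Sum>j\<in>?S. ?f j)"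
    unfolding chebyshev_power_approx_def poly_sum
  proof (rule sum.cong)
    fix j
    have "real (nat \<bar>2 * int j - int k\<bar>) = \<bar>2 * real j - real k\<bar>"
      by linarith
    then have "poly (chebyshev_T (nat \<bar>2 * int j - int k\<bar>)) x = cos ((2 * real j - real k) * a)"
      by (metis x_eq poly_chebyshev_T_cos cos_abs_real abs_mult)
    then show "poly (smult (real (k choose j) / 2 ^ k) (chebyshev_T (nat \<bar>2 * int j - int k\<bar>))) x = ?f j"
      by simp
  qed simp
  moreover have "x ^ k = (\<Sum>j\<in>?S. ?f j) + (\<Sum>j\<in>?A. ?f j)"
  proof -
    have "{..k} = ?S \<union> ?A"
      by auto
    then have "(\<Sum>j\<le>k. ?f j) = (\<Sum>j\<in>?S. ?f j) + (\<Sum>j\<in>?A. ?f j)"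
      by (simp only:) (rule sum.union_disjoint, auto)
    then show ?thesis
      unfolding x_eq cos_power_eq_sum by (simp add: sum_divide_distrib)
  qed
  ultimately have "\<bar>x ^ k - poly (chebyshev_power_approx d k) x\<bar> = \<bar>\<Sum>j\<in>?A. ?f j\<bar>"
    by simp
  also have "\<dots> \<le> (\<Sum>j\<in>?A. real (k choose j) / 2 ^ k)"
    by (rule order_trans[OF sum_abs sum_mono]) (simp add: abs_mult divide_right_mono)
  finally show ?thesis
    by (simp add: sum_divide_distrib)
qed

lemma chebyshev_power_approx_error_le:
  fixes x \<epsilon> :: real
  assumes "\<bar>x\<bar> \<le> 1" and "\<epsilon> > 0" and "k \<le> K" and "2 * real K * ln (2 / \<epsilon>) \<le> (real d)\<^sup>2"
  shows "\<bar>x ^ k - poly (chebyshev_power_approx d k) x\<bar> \<le> \<epsilon>"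
proof (cases "k = 0")
  case True
  then have no_tail: "{j. j \<le> k \<and> \<bar>2 * real j - real k\<bar> > real d} = {}"
    by auto
  have "\<bar>x ^ k - poly (chebyshev_power_approx d k) x\<bar> \<le> 0"
    using chebyshev_power_approx_error_tail[OF assms(1), of k d] unfolding no_tail by simp
  with assms(2) show ?thesis
    by simp
next
  case False
  have "2 * real k * ln (2 / \<epsilon>) \<le> (real d)\<^sup>2"
  proof (cases "ln (2 / \<epsilon>) \<ge> 0")
    case True
    then have "2 * real k * ln (2 / \<epsilon>) \<le> 2 * real K * ln (2 / \<epsilon>)"
      using \<open>k \<le> K\<close> by (intro mult_right_mono) auto
    with assms(4) show ?thesis
      by linarith
  next
    case False
    then have "2 * real k * ln (2 / \<epsilon>) \<le> 0"
      by (simp add: mult_nonneg_nonpos)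
    then show ?thesis
      using zero_le_power2[of "real d"] by linarith
  qed
  have "\<bar>x ^ k - poly (chebyshev_power_approx d k) x\<bar>
      \<le> (\<Sum>j | j \<le> k \<and> \<bar>2 * real j - real k\<bar> > real d. real (k choose j)) / 2 ^ k"
    by (rule chebyshev_power_approx_error_tail[OF assms(1)])
  also have "\<dots> \<le> 2 * 2 ^ k * exp (- (real d)\<^sup>2 / (2 * real k)) / 2 ^ k"
    using False by (intro divide_right_mono binomial_tail_le) auto
  also have "\<dots> \<le> 2 * exp (- ln (2 / \<epsilon>))"
    using \<open>2 * real k * ln (2 / \<epsilon>) \<le> (real d)\<^sup>2\<close> False by (simp add: field_simps)
  also have "\<dots> = \<epsilon>"
    using assms(2) by (simp add: exp_minus)
  finally show ?thesis .
qed

lemma exp_taylor_sum_le: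
  fixes y :: real
  assumes "y \<ge> 0"
  shows "(\<Sum>m<n. y ^ m / fact m) \<le> exp y"
proof -
  obtain t where "exp y = (\<Sum>m<n. y ^ m / fact m) + exp t / fact n * y ^ n"
    using Maclaurin_exp_le[of y n] by blast
  then show ?thesis
    using assms by simp
qed

lemma abs_exp_minus_taylor_sum_le:
  fixes y c :: real
  assumes "\<bar>y\<bar> \<le> c"
  shows "\<bar>exp y - (\<Sum>m<n. y ^ m / fact m)\<bar> \<le> exp c * c ^ n / fact n"
proof -
  obtain t where t: "\<bar>t\<bar> \<le> \<bar>y\<bar>" "exp y = (\<Sum>m<n. y ^ m / fact m) + exp t / fact n * y ^ n"
    using Maclaurin_exp_le[of y n] by blast
  then have "\<bar>exp y - (\<Sum>m<n. y ^ m / fact m)\<bar> = exp t / fact n * \<bar>y\<bar> ^ n"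
    by (simp add: abs_mult power_abs)
  also have "\<dots> \<le> exp c / fact n * c ^ n"
    using t assms by (intro mult_mono divide_right_mono power_mono) auto
  finally show ?thesis
    by simp
qed

lemma power_div_fact_le:
  fixes y :: real
  assumes "y \<ge> 0"
  shows "y ^ n / fact n \<le> (y * exp 1 / real n) ^ n"
proof -
  have "real n ^ n / fact n \<le> (\<Sum>m<Suc n. real n ^ m / fact m)"
    by (intro member_le_sum) auto
  also have "\<dots> \<le> exp (real n)"
    by (rule exp_taylor_sum_le) simp
  finally have "real n ^ n / fact n \<le> exp 1 ^ n"
    by (simp flip: exp_of_nat_mult)
  then have "(y / real n) ^ n * (real n ^ n / fact n) \<le> (y / real n) ^ n * exp 1 ^ n"
    using assms by (intro mult_left_mono) auto
  then show ?thesis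
    by (cases "n = 0") (simp_all add: power_divide power_mult_distrib)
qed

lemma power_div_fact_le_exp_neg:
  fixes l :: real
  assumes "l \<ge> 0" and "l * (exp 1)\<^sup>2 \<le> real n"
  shows "l ^ n / fact n \<le> exp (- real n)"
proof -
  have "l * exp 1 / real n \<le> exp (-1)"
    using assms(2) by (cases "n = 0") (simp_all add: exp_minus field_simps power2_eq_square)
  then have "(l * exp 1 / real n) ^ n \<le> exp (-1) ^ n"
    using assms(1) by (intro power_mono) auto
  then show ?thesis
    using power_div_fact_le[OF assms(1), of n] by (simp flip: exp_of_nat_mult)
qed

lemma abs_exp_mult_minus_sum_le:
  fixes l x \<epsilon> :: real and y :: "nat \<Rightarrow> real"
  assumes "l \<ge> 0" and "\<bar>x\<bar> \<le> 1" and "\<And>k. k \<le> K \<Longrightarrow> \<bar>x ^ k - y k\<bar> \<le> \<epsilon>"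
  shows "\<bar>exp (l * x) - (\<Sum>k\<le>K. l ^ k / fact k * y k)\<bar> \<le> exp l * (l ^ Suc K / fact (Suc K) + \<epsilon>)"
proof -
  have "exp (l * x) - (\<Sum>k\<le>K. l ^ k / fact k * y k)
      = (exp (l * x) - (\<Sum>k<Suc K. (l * x) ^ k / fact k)) + (\<Sum>k\<le>K. l ^ k / fact k * (x ^ k - y k))"
    by (simp add: lessThan_Suc_atMost power_mult_distrib right_diff_distrib sum_subtractf)
  also have "\<bar>\<dots>\<bar> \<le> exp l * l ^ Suc K / fact (Suc K) + (\<Sum>k\<le>K. l ^ k / fact k * \<epsilon>)"
  proof (rule order_trans[OF abs_triangle_ineq add_mono])
    show "\<bar>exp (l * x) - (\<Sum>k<Suc K. (l * x) ^ k / fact k)\<bar> \<le> exp l * l ^ Suc K / fact (Suc K)"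
      using assms(1,2) by (intro abs_exp_minus_taylor_sum_le) (simp add: abs_mult mult_left_le)
    show "\<bar>\<Sum>k\<le>K. l ^ k / fact k * (x ^ k - y k)\<bar> \<le> (\<Sum>k\<le>K. l ^ k / fact k * \<epsilon>)"
    proof (rule order_trans[OF sum_abs sum_mono])
      fix k assume "k \<in> {..K}"
      then have "l ^ k / fact k * \<bar>x ^ k - y k\<bar> \<le> l ^ k / fact k * \<epsilon>"
        using assms(1,3) by (intro mult_left_mono) auto
      then show "\<bar>l ^ k / fact k * (x ^ k - y k)\<bar> \<le> l ^ k / fact k * \<epsilon>"
        using assms(1) by (simp add: abs_mult)
    qed
  qed
  also have "(\<Sum>k\<le>K. l ^ k / fact k * \<epsilon>) \<le> exp l * \<epsilon>"
  proof -
    have "\<epsilon> \<ge> 0"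
      using assms(3)[of 0] by simp
    moreover have "(\<Sum>k\<le>K. l ^ k / fact k) \<le> exp l"
      using exp_taylor_sum_le[OF assms(1), of "Suc K"] by (simp add: lessThan_Suc_atMost)
    ultimately show ?thesis
      by (metis mult_right_mono sum_distrib_right)
  qed
  finally show ?thesis
    by (simp add: field_simps)
qed

lemma exp_mult_poly_approx:
  fixes l \<delta> :: real and K d :: nat
  assumes "l \<ge> 0" and "\<delta> > 0"
    and K_ge: "l * (exp 1)\<^sup>2 \<le> real K" "ln (2 / \<delta>) \<le> real K"
    and d_ge: "2 * real K * ln (4 / \<delta>) \<le> (real d)\<^sup>2"
  shows "\<exists>P. degree P \<le> d \<and>
           (\<forall>x. \<bar>x\<bar> \<le> 1 \<longrightarrow> \<bar>exp (l * (x - 1)) - poly P x\<bar> \<le> (1 + exp (-1)) * \<delta> / 2)"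
proof -
  define P where "P = (\<Sum>k\<le>K. smult (exp (-l) * l ^ k / fact k) (chebyshev_power_approx d k))"
  have "degree P \<le> d"
    unfolding P_def by (intro degree_sum_le) (auto intro: order_trans[OF degree_smult_le]
        degree_chebyshev_power_approx_le)
  have power_approx: "\<bar>x ^ k - poly (chebyshev_power_approx d k) x\<bar> \<le> \<delta> / 2"
    if "\<bar>x\<bar> \<le> 1" and "k \<le> K" for x k
    using chebyshev_power_approx_error_le[of x "\<delta> / 2" k K d] that \<open>\<delta> > 0\<close> d_ge by simp
  have taylor_rest: "l ^ Suc K / fact (Suc K) \<le> exp (-1) * (\<delta> / 2)"
  proof -
    have "l ^ Suc K / fact (Suc K) \<le> exp (- real (Suc K))"
      using K_ge(1) by (intro power_div_fact_le_exp_neg \<open>l \<ge> 0\<close>) simp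
    also have "\<dots> \<le> exp (-1) * exp (- ln (2 / \<delta>))"
      using K_ge(2) by (simp flip: exp_add)
    also have "\<dots> = exp (-1) * (\<delta> / 2)"
      using \<open>\<delta> > 0\<close> by (simp add: exp_minus)
    finally show ?thesis .
  qed
  have "\<bar>exp (l * (x - 1)) - poly P x\<bar> \<le> (1 + exp (-1)) * \<delta> / 2" if "\<bar>x\<bar> \<le> 1" for x
  proof -
    have "exp (l * (x - 1)) - poly P x
        = exp (-l) * (exp (l * x) - (\<Sum>k\<le>K. l ^ k / fact k * poly (chebyshev_power_approx d k) x))"
      by (simp add: P_def poly_sum sum_distrib_left right_diff_distrib mult_ac flip: exp_add)
    also have "\<bar>\<dots>\<bar> \<le> exp (-l) * (exp l * (l ^ Suc K / fact (Suc K) + \<delta> / 2))"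
      unfolding abs_mult using \<open>l \<ge> 0\<close> that power_approx
      by (intro mult_mono abs_exp_mult_minus_sum_le) auto
    also have "\<dots> = l ^ Suc K / fact (Suc K) + \<delta> / 2"
      by (simp flip: mult.assoc exp_add)
    also have "\<dots> \<le> exp (-1) * (\<delta> / 2) + \<delta> / 2"
      using taylor_rest by simp
    finally show ?thesis
      by (simp add: field_simps)
  qed
  with \<open>degree P \<le> d\<close> show ?thesis
    by blast
qed

lemma exists_degree_eq_poly_close:
  fixes p :: "real poly" and b \<epsilon> :: real
  assumes "degree p \<le> n" and "\<epsilon> > 0"
  shows "\<exists>q. degree q = n \<and> (\<forall>t. \<bar>t\<bar> \<le> b \<longrightarrow> \<bar>poly q t - poly p t\<bar> \<le> \<epsilon>)"
proof -
  have "1 + \<bar>b\<bar> ^ n > 0"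
    by (simp add: add_pos_nonneg)
  define e' where "e' = \<epsilon> / (1 + \<bar>b\<bar> ^ n)"
  have "e' > 0"
    using assms(2) \<open>1 + \<bar>b\<bar> ^ n > 0\<close> by (simp add: e'_def)
  define e where "e = (if coeff p n + e' = 0 then e' / 2 else e')"
  have e: "0 < e" "e \<le> e'" "coeff p n + e \<noteq> 0"
    using \<open>e' > 0\<close> by (auto simp: e_def)
  define q where "q = p + monom e n"
  have "degree q = n"
  proof (rule antisym)
    show "degree q \<le> n"
      unfolding q_def using assms(1) degree_monom_le[of e n] by (intro degree_add_le) auto
    show "n \<le> degree q"
      using e(3) by (intro le_degree) (simp add: q_def)
  qed
  moreover have "\<bar>poly q t - poly p t\<bar> \<le> \<epsilon>" if "\<bar>t\<bar> \<le> b" for t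
  proof -
    have "\<bar>poly q t - poly p t\<bar> = e * \<bar>t\<bar> ^ n"
      using e(1) by (simp add: q_def poly_monom abs_mult power_abs)
    also have "\<dots> \<le> e' * \<bar>b\<bar> ^ n"
      using e that by (intro mult_mono power_mono) auto
    also have "\<dots> \<le> \<epsilon>"
      using assms(2) \<open>1 + \<bar>b\<bar> ^ n > 0\<close> by (simp add: e'_def field_simps)
    finally show ?thesis .
  qed
  ultimately show ?thesis
    by blast
qed

lemma exp_neg_poly_approx:
  fixes b \<delta> :: real and K d :: nat
  assumes "b > 0" and "\<delta> > 0"
    and K_ge: "b * (exp 1)\<^sup>2 / 2 \<le> real K" "ln (2 / \<delta>) \<le> real K"
    and d_ge: "2 * real K * ln (4 / \<delta>) \<le> (real d)\<^sup>2"
  shows "\<exists>s. degree s = d \<and> (\<forall>t\<in>{0..b}. \<bar>exp (-t) - poly s t\<bar> \<le> \<delta>)"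
proof -
  obtain P where "degree P \<le> d"
    and P: "\<And>x. \<bar>x\<bar> \<le> 1 \<Longrightarrow> \<bar>exp (b / 2 * (x - 1)) - poly P x\<bar> \<le> (1 + exp (-1)) * \<delta> / 2"
    using exp_mult_poly_approx[of "b / 2" \<delta> K d] assms by auto
  define s0 where "s0 = pcompose P [:1, -2 / b:]"
  have "degree s0 \<le> d"
    using \<open>degree P \<le> d\<close> \<open>b > 0\<close> by (simp add: s0_def degree_pcompose)
  have s0: "\<bar>exp (-t) - poly s0 t\<bar> \<le> (1 + exp (-1)) * \<delta> / 2" if "t \<in> {0..b}" for t
    using P[of "1 - 2 * t / b"] that \<open>b > 0\<close>
    by (simp add: s0_def poly_pcompose abs_le_iff field_simps)
  have "\<delta> - (1 + exp (-1)) * \<delta> / 2 > 0"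
    using \<open>\<delta> > 0\<close> by simp
  then obtain s where "degree s = d"
    and s: "\<forall>t. \<bar>t\<bar> \<le> b \<longrightarrow> \<bar>poly s t - poly s0 t\<bar> \<le> \<delta> - (1 + exp (-1)) * \<delta> / 2"
    using exists_degree_eq_poly_close[OF \<open>degree s0 \<le> d\<close>, where b = b] by blast
  have "\<bar>exp (-t) - poly s t\<bar> \<le> \<delta>" if "t \<in> {0..b}" for t
    using s0[OF that] s that unfolding abs_le_iff by auto
  with \<open>degree s = d\<close> show ?thesis
    by blast
qed

lemma abs_square_diff_le:
  fixes u v \<delta> :: real
  assumes "\<bar>u\<bar> \<le> 1" and "\<bar>u - v\<bar> \<le> \<delta>"
  shows "\<bar>u\<^sup>2 - v\<^sup>2\<bar> \<le> 2 * \<delta> + \<delta>\<^sup>2"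
proof -
  have "\<bar>u\<^sup>2 - v\<^sup>2\<bar> = \<bar>u - v\<bar> * \<bar>u + v\<bar>"
    by (simp add: power2_eq_square algebra_simps flip: abs_mult)
  also have "\<dots> \<le> \<delta> * (2 + \<delta>)"
    using assms by (intro mult_mono) (auto simp: abs_le_iff)
  finally show ?thesis
    by (simp add: power2_eq_square algebra_simps)
qed

theorem corollary5:
  fixes b \<delta> :: real
  assumes "b > 0" and "0 < \<delta>" and "\<delta> < 1"
  shows "let \<theta> = real_of_int \<lceil>max (b * (exp 1)^2 / 2) (ln (2 / \<delta>))\<rceil>
         in \<exists>s :: real poly.
              degree s = nat \<lceil>sqrt (2 * \<theta> * ln (4 / \<delta>))\<rceil> \<and>
              (\<forall>t\<in>{0..b}. \<bar>exp (-2 * t) - (poly s t)^2\<bar> \<le> 2 * \<delta> + \<delta>^2) \<and>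
              2 * \<delta> + \<delta>^2 \<le> 3 * \<delta>"
proof -
  define K where "K = nat \<lceil>max (b * (exp 1)\<^sup>2 / 2) (ln (2 / \<delta>))\<rceil>"
  define D where "D = nat \<lceil>sqrt (2 * real K * ln (4 / \<delta>))\<rceil>"
  have "max (b * (exp 1)\<^sup>2 / 2) (ln (2 / \<delta>)) > 0"
    using \<open>b > 0\<close> by (simp add: less_max_iff_disj)
  then have K_eq: "real K = real_of_int \<lceil>max (b * (exp 1)\<^sup>2 / 2) (ln (2 / \<delta>))\<rceil>"
    by (simp add: K_def)
  have K_ge: "b * (exp 1)\<^sup>2 / 2 \<le> real K" "ln (2 / \<delta>) \<le> real K"
    unfolding K_eq by (meson le_of_int_ceiling max.boundedE)+
  have "2 * real K * ln (4 / \<delta>) \<le> (real D)\<^sup>2"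
    unfolding D_def by (intro sqrt_le_D) linarith
  then obtain s where "degree s = D" and s: "\<forall>t\<in>{0..b}. \<bar>exp (-t) - poly s t\<bar> \<le> \<delta>"
    using exp_neg_poly_approx[OF \<open>b > 0\<close> \<open>\<delta> > 0\<close> K_ge] by blast
  have "\<bar>exp (-2 * t) - (poly s t)\<^sup>2\<bar> \<le> 2 * \<delta> + \<delta>\<^sup>2" if "t \<in> {0..b}" for t
  proof -
    have "exp (-2 * t) = (exp (-t))\<^sup>2"
      by (simp add: power2_eq_square flip: exp_add)
    then show ?thesis
      using abs_square_diff_le[of "exp (-t)" "poly s t" \<delta>] s that by simp
  qed
  moreover have "2 * \<delta> + \<delta>\<^sup>2 \<le> 3 * \<delta>"
    using assms(2,3) by (simp add: power2_eq_square)
  ultimately show ?thesis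
    unfolding Let_def K_eq[symmetric] D_def[symmetric] using \<open>degree s = D\<close> by blast
qed

end
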